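(* Let $\nu\in\mathbb{Z}_{\ge0}\cup\{\infty\}$ be a changepoint, $T\ge0$ a random sequence length, and $\tau\ge0$ the detection time of an online changepoint detector, with $\tau$ independent of $T$ conditionally on $\nu=\infty$, and $\mu_\infty:=\mathbb{E}[\tau\mid\nu=\infty]<\infty$. Let $S^{\mathrm{ARL}}(t):=P(\tau>t\mid\nu=\infty)$, let $T^*_{\max}:=\inf\{t\mid P(T\le t)=1\}$ (assumed finite), and set $$\mu^{(\mathrm{KM})}_T:=\int_0^{T^*_{\max}}S^{\mathrm{ARL}}(t)\,dt,\qquad \mu^{(\mathrm{LB})}_T:=\mathbb{E}[\tau\mid\nu=\infty,\ \tau\le T],$$ $\mathcal{B}_{\mathrm{TR}}(\hat\mu^{(\mathrm{KM})}_T):=\mu^{(\mathrm{KM})}_T-\mu_\infty$ and $\mathcal{B}_{\mathrm{TR}}(\hat\mu^{(\mathrm{LB})}_T):=\mu^{(\mathrm{LB})}_T-\mu_\infty$. Then $$\mathcal{B}_{\mathrm{TR}}(\hat\mu^{(\mathrm{LB})}_T)\le\mathcal{B}_{\mathrm{TR}}(\hat\mu^{(\mathrm{KM})}_T)\le0.$$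
   Context: Setting: a sequence $X^{(0)},X^{(1)},\dots$ has frames drawn from a pre-change density before the changepoint $\nu$ and a post-change density from $\nu$ on ($\nu=\infty$ means no change); $\nu$ and the length $T$ are independent of the observations. $\mu_\infty$ is the average run length (ARL). $\mu^{(\mathrm{KM})}_T$ is the population version of the KM-ARL estimator with upper integration limit $a=T^*_{\max}$, and $\mu^{(\mathrm{LB})}_T$ the population version of the conventional estimator averaging detection times only over sequences where detection occurs within the sequence length. *)

theory Defs
  imports "HOL-Probability.Probability"
begin

text \<open>All quantities are taken under the conditional law given nu = infinity;
  M denotes that conditional probability space.\<close>

definition S_ARL :: "'a measure \<Rightarrow> ('a \<Rightarrow> real) \<Rightarrow> real \<Rightarrow> real" where
  "S_ARL M tau t = measure M {x \<in> space M. tau x > t}"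

definition T_max :: "'a measure \<Rightarrow> ('a \<Rightarrow> real) \<Rightarrow> real" where
  "T_max M T = Inf {t. measure M {x \<in> space M. T x \<le> t} = 1}"

definition mu_inf :: "'a measure \<Rightarrow> ('a \<Rightarrow> real) \<Rightarrow> real" where
  "mu_inf M tau = (\<integral>x. tau x \<partial>M)"

definition mu_KM :: "'a measure \<Rightarrow> ('a \<Rightarrow> real) \<Rightarrow> ('a \<Rightarrow> real) \<Rightarrow> real" where
  "mu_KM M tau T = (\<integral>t\<in>{0..T_max M T}. S_ARL M tau t \<partial>lborel)"

definition mu_LB :: "'a measure \<Rightarrow> ('a \<Rightarrow> real) \<Rightarrow> ('a \<Rightarrow> real) \<Rightarrow> real" where
  "mu_LB M tau T =
     (\<integral>x. tau x * indicator {y \<in> space M. tau y \<le> T y} x \<partial>M)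
       / measure M {x \<in> space M. tau x \<le> T x}"

definition bias_KM where "bias_KM M tau T = mu_KM M tau T - mu_inf M tau"
definition bias_LB where "bias_LB M tau T = mu_LB M tau T - mu_inf M tau"

end

theory Submission
  imports Defs
begin

(* By the layer-cake formula the KM population value is E[min tau a] with a = T_max, which is at most
   E[tau].  For a fixed level s, the quantities min tau s and [tau <= s] are oppositely monotone in tau,
   hence negatively correlated: E[tau; tau <= s] <= E[min tau s] P(tau <= s) <= E[min tau a] P(tau <= s)
   for s <= a.  Since T <= a almost surely and T is independent of tau, integrating over the law of T
   gives E[tau; tau <= T] <= E[min tau a] P(tau <= T), i.e. mu_LB <= mu_KM. *)

context prob_space
begin

lemma nn_integral_survival_eq_min:
  assumes [measurable]: "X \<in> borel_measurable M"
    and nonneg: "\<forall>x\<in>space M. X x \<ge> 0" and "a \<ge> 0"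
  shows "(\<integral>\<^sup>+t. ennreal (indicator {0..a} t * S_ARL M X t) \<partial>lborel)
       = (\<integral>\<^sup>+x. ennreal (min (X x) a) \<partial>M)"
proof -
  interpret pair_sigma_finite M lborel
    by (simp add: pair_sigma_finite.intro sigma_finite_measure_axioms sigma_finite_lborel)
  define f where "f x t = ennreal (if 0 \<le> t \<and> t \<le> a \<and> t < X x then 1 else 0)" for x t
  have f_measurable: "case_prod f \<in> borel_measurable (M \<Otimes>\<^sub>M lborel)"
    unfolding f_def by measurable
  have integral_M: "(\<integral>\<^sup>+x. f x t \<partial>M) = ennreal (indicator {0..a} t * S_ARL M X t)" for t
  proof -
    have "(\<integral>\<^sup>+x. f x t \<partial>M)
        = (\<integral>\<^sup>+x. indicator {0..a} t * indicator {x\<in>space M. t < X x} x \<partial>M)"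
      by (intro nn_integral_cong) (auto simp: f_def indicator_def)
    also have "\<dots> = indicator {0..a} t * emeasure M {x\<in>space M. t < X x}"
      by (subst nn_integral_cmult_indicator) auto
    finally show ?thesis
      by (simp add: S_ARL_def emeasure_eq_measure indicator_def)
  qed
  have integral_lborel: "(\<integral>\<^sup>+t. f x t \<partial>lborel) = ennreal (min (X x) a)" if "x \<in> space M" for x
  proof (cases "X x \<le> a")
    case True
    have "(\<integral>\<^sup>+t. f x t \<partial>lborel) = (\<integral>\<^sup>+t. indicator {0..<X x} t \<partial>lborel)"
      using True by (intro nn_integral_cong) (auto simp: f_def indicator_def)
    then show ?thesis
      using True nonneg that by simp
  next
    case False
    have "(\<integral>\<^sup>+t. f x t \<partial>lborel) = (\<integral>\<^sup>+t. indicator {0..a} t \<partial>lborel)"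
      using False by (intro nn_integral_cong) (auto simp: f_def indicator_def)
    then show ?thesis
      using False \<open>a \<ge> 0\<close> by simp
  qed
  have "(\<integral>\<^sup>+t. ennreal (indicator {0..a} t * S_ARL M X t) \<partial>lborel)
      = (\<integral>\<^sup>+t. (\<integral>\<^sup>+x. f x t \<partial>M) \<partial>lborel)"
    by (simp add: integral_M)
  also have "\<dots> = (\<integral>\<^sup>+x. (\<integral>\<^sup>+t. f x t \<partial>lborel) \<partial>M)"
    by (rule Fubini'[OF f_measurable])
  also have "\<dots> = (\<integral>\<^sup>+x. ennreal (min (X x) a) \<partial>M)"
    by (intro nn_integral_cong) (simp add: integral_lborel)
  finally show ?thesis .
qed

lemma set_integral_survival_eq_expectation_min:
  assumes [measurable]: "X \<in> borel_measurable M"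
    and nonneg: "\<forall>x\<in>space M. X x \<ge> 0" and "a \<ge> 0"
  shows "(\<integral>t\<in>{0..a}. S_ARL M X t \<partial>lborel) = expectation (\<lambda>x. min (X x) a)"
proof -
  have "mono (\<lambda>t. - S_ARL M X t)"
    unfolding mono_def S_ARL_def by (auto intro!: finite_measure_mono)
  then have [measurable]: "S_ARL M X \<in> borel_measurable borel"
    using borel_measurable_uminus[OF borel_measurable_mono] by fastforce
  have "(\<integral>t\<in>{0..a}. S_ARL M X t \<partial>lborel) = (\<integral>t. indicator {0..a} t * S_ARL M X t \<partial>lborel)"
    by (simp add: set_lebesgue_integral_def)
  also have "\<dots> = enn2real (\<integral>\<^sup>+t. ennreal (indicator {0..a} t * S_ARL M X t) \<partial>lborel)"
    by (rule integral_eq_nn_integral) (auto simp: S_ARL_def)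
  also have "\<dots> = enn2real (\<integral>\<^sup>+x. ennreal (min (X x) a) \<partial>M)"
    using assms by (simp add: nn_integral_survival_eq_min)
  also have "\<dots> = expectation (\<lambda>x. min (X x) a)"
    using nonneg \<open>a \<ge> 0\<close> by (intro integral_eq_nn_integral[symmetric]) auto
  finally show ?thesis .
qed

lemma T_max_nonneg:
  assumes "\<forall>x\<in>space M. T x \<ge> 0" and "\<exists>t. prob {x \<in> space M. T x \<le> t} = 1"
  shows "T_max M T \<ge> 0"
proof -
  have "t \<ge> 0" if "prob {x \<in> space M. T x \<le> t} = 1" for t
  proof (rule ccontr)
    assume "\<not> t \<ge> 0"
    then have "{x \<in> space M. T x \<le> t} = {}"
      using assms(1) by force
    with that show False by simp
  qed
  then show ?thesis
    unfolding T_max_def using assms(2) by (intro cInf_greatest) auto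
qed

lemma AE_le_T_max:
  assumes [measurable]: "T \<in> borel_measurable M"
    and "\<exists>t. prob {x \<in> space M. T x \<le> t} = 1"
  shows "AE x in M. T x \<le> T_max M T"
proof -
  define S where "S = {t. prob {x \<in> space M. T x \<le> t} = 1}"
  have "S \<noteq> {}"
    using assms(2) by (auto simp: S_def)
  have "AE x in M. T x \<le> T_max M T + 1 / real (Suc n)" for n
  proof -
    obtain t where t: "t \<in> S" "t < T_max M T + 1 / real (Suc n)"
      using \<open>S \<noteq> {}\<close> cInf_lessD[of S "T_max M T + 1 / real (Suc n)"]
      unfolding T_max_def S_def[symmetric] by auto
    have "AE x in M. x \<in> {x \<in> space M. T x \<le> t}"
      using t(1) by (intro AE_prob_1) (simp add: S_def)
    then show ?thesis
      by eventually_elim (use t(2) in auto)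
  qed
  then have "AE x in M. \<forall>n. T x \<le> T_max M T + 1 / real (Suc n)"
    by (simp add: AE_all_countable)
  then show ?thesis
  proof eventually_elim
    case (elim x)
    show ?case
    proof (rule field_le_epsilon)
      fix e :: real
      assume "0 < e"
      then obtain n where "1 / real (Suc n) < e"
        using nat_approx_posE by blast
      then show "T x \<le> T_max M T + e"
        using elim[rule_format, of n] by linarith
    qed
  qed
qed

lemma integral_below_level_le:
  assumes [measurable]: "X \<in> borel_measurable M" and "integrable M X"
  shows "(\<integral>x. X x * indicator {y\<in>space M. X y \<le> s} x \<partial>M)
       \<le> expectation (\<lambda>x. min (X x) s) * prob {y\<in>space M. X y \<le> s}"
proof -
  define A where "A = {y\<in>space M. X y \<le> s}"
  have [measurable]: "A \<in> events"
    unfolding A_def by measurable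
  define I where "I = (\<integral>x. X x * indicator A x \<partial>M)"
  define q where "q = prob A"
  have integrable_below: "integrable M (\<lambda>x. X x * indicator A x)"
    using \<open>integrable M X\<close> by (intro integrable_real_mult_indicator) simp_all
  have integrable_indicator: "integrable M (indicator A :: 'a \<Rightarrow> real)"
    by (intro integrable_real_indicator) (auto simp: emeasure_eq_measure)
  have "expectation (\<lambda>x. min (X x) s) = expectation (\<lambda>x. X x * indicator A x + s * (1 - indicator A x))"
    by (intro Bochner_Integration.integral_cong) (auto simp: A_def indicator_def)
  also have "\<dots> = I + s * (1 - q)"
    using integrable_below integrable_indicator
    by (simp add: I_def q_def algebra_simps prob_space emeasure_eq_measure)
  finally have expectation_min: "expectation (\<lambda>x. min (X x) s) = I + s * (1 - q)" .
  have "I \<le> expectation (\<lambda>x. s * indicator A x)"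
    unfolding I_def
    by (intro integral_mono integrable_below integrable_mult_right integrable_indicator)
      (auto simp: A_def indicator_def)
  then have "I \<le> s * q"
    by (simp add: q_def)
  moreover have "q \<le> 1"
    by (simp add: q_def)
  \<comment> \<open>\<open>E[min X s] q - I = (1 - q) (s q - I)\<close>\<close>
  ultimately have "0 \<le> (1 - q) * (s * q - I)"
    by simp
  then show ?thesis
    unfolding expectation_min A_def[symmetric] I_def[symmetric] q_def[symmetric]
    by (simp add: algebra_simps)
qed

lemma nn_integral_indep_var:
  assumes "indep_var N1 X N2 Y" and h_measurable: "h \<in> borel_measurable (N1 \<Otimes>\<^sub>M N2)"
  shows "(\<integral>\<^sup>+x. h (X x, Y x) \<partial>M) = (\<integral>\<^sup>+y. (\<integral>\<^sup>+x. h (X x, y) \<partial>M) \<partial>distr M N2 Y)"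
proof -
  have [measurable]: "X \<in> measurable M N1" "Y \<in> measurable M N2"
    and product: "distr M N1 X \<Otimes>\<^sub>M distr M N2 Y = distr M (N1 \<Otimes>\<^sub>M N2) (\<lambda>x. (X x, Y x))"
    using assms(1) unfolding indep_var_distribution_eq by auto
  interpret X: prob_space "distr M N1 X"
    by (rule prob_space_distr) simp
  interpret Y: prob_space "distr M N2 Y"
    by (rule prob_space_distr) simp
  interpret pair_sigma_finite "distr M N1 X" "distr M N2 Y"
    by (simp add: pair_sigma_finite.intro X.sigma_finite_measure_axioms Y.sigma_finite_measure_axioms)
  have "(\<integral>\<^sup>+x. h (X x, Y x) \<partial>M) = (\<integral>\<^sup>+z. h z \<partial>distr M (N1 \<Otimes>\<^sub>M N2) (\<lambda>x. (X x, Y x)))"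
    using h_measurable by (subst nn_integral_distr) auto
  also have "\<dots> = (\<integral>\<^sup>+y. (\<integral>\<^sup>+u. h (u, y) \<partial>distr M N1 X) \<partial>distr M N2 Y)"
    unfolding product[symmetric]
    by (rule nn_integral_snd[symmetric]) (use h_measurable in simp)
  also have "\<dots> = (\<integral>\<^sup>+y. (\<integral>\<^sup>+x. h (X x, y) \<partial>M) \<partial>distr M N2 Y)"
    using h_measurable
    by (intro nn_integral_cong, subst nn_integral_distr) (auto simp: measurable_Pair2)
  finally show ?thesis .
qed

lemma nn_integral_below_level_le:
  assumes [measurable]: "X \<in> borel_measurable M"
    and "integrable M X" and X_nonneg: "\<forall>x\<in>space M. X x \<ge> 0" and "a \<ge> 0" and "s \<le> a"
  shows "(\<integral>\<^sup>+x. ennreal (X x * indicator {y\<in>space M. X y \<le> s} x) \<partial>M)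
       \<le> ennreal (expectation (\<lambda>x. min (X x) a)) * emeasure M {y\<in>space M. X y \<le> s}"
proof -
  define A where "A = {y\<in>space M. X y \<le> s}"
  have [measurable]: "A \<in> events"
    unfolding A_def by measurable
  have "expectation (\<lambda>x. min (X x) a) \<ge> 0"
    using X_nonneg \<open>a \<ge> 0\<close> by (intro integral_nonneg_AE) auto
  have "(\<integral>\<^sup>+x. ennreal (X x * indicator A x) \<partial>M) = ennreal (\<integral>x. X x * indicator A x \<partial>M)"
    using \<open>integrable M X\<close> X_nonneg
    by (intro nn_integral_eq_integral integrable_real_mult_indicator) (auto simp: indicator_def)
  also have "\<dots> \<le> ennreal (expectation (\<lambda>x. min (X x) s) * prob A)"
    unfolding A_def using \<open>integrable M X\<close> by (intro ennreal_leI integral_below_level_le) auto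
  also have "\<dots> \<le> ennreal (expectation (\<lambda>x. min (X x) a) * prob A)"
    using \<open>integrable M X\<close> \<open>s \<le> a\<close> by (intro ennreal_leI mult_right_mono integral_mono) auto
  also have "\<dots> = ennreal (expectation (\<lambda>x. min (X x) a)) * emeasure M A"
    using \<open>expectation (\<lambda>x. min (X x) a) \<ge> 0\<close> by (simp add: emeasure_eq_measure ennreal_mult)
  finally show ?thesis
    unfolding A_def .
qed

lemma integral_below_indep_level_le:
  assumes [measurable]: "X \<in> borel_measurable M" "Y \<in> borel_measurable M"
    and "integrable M X" and X_nonneg: "\<forall>x\<in>space M. X x \<ge> 0"
    and indep: "indep_var borel X borel Y"
    and "a \<ge> 0" and Y_le: "AE x in M. Y x \<le> a"
  shows "(\<integral>x. X x * indicator {y\<in>space M. X y \<le> Y y} x \<partial>M)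
       \<le> expectation (\<lambda>x. min (X x) a) * prob {y\<in>space M. X y \<le> Y y}"
proof -
  define c where "c = expectation (\<lambda>x. min (X x) a)"
  have "c \<ge> 0"
    unfolding c_def using X_nonneg \<open>a \<ge> 0\<close> by (intro integral_nonneg_AE) auto
  define D where "D = {y\<in>space M. X y \<le> Y y}"
  have [measurable]: "D \<in> events"
    unfolding D_def by measurable
  define h_below where "h_below = (\<lambda>(u :: real, s). ennreal (if u \<le> s then u else 0))"
  define h_const where "h_const = (\<lambda>(u :: real, s). if u \<le> s then ennreal c else 0)"
  have [measurable]: "h_below \<in> borel_measurable (borel \<Otimes>\<^sub>M borel)"
    "h_const \<in> borel_measurable (borel \<Otimes>\<^sub>M borel)"
    unfolding h_below_def h_const_def by measurable
  have level: "(\<integral>\<^sup>+x. h_below (X x, s) \<partial>M) \<le> (\<integral>\<^sup>+x. h_const (X x, s) \<partial>M)" if "s \<le> a" for s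
  proof -
    have "(\<integral>\<^sup>+x. h_below (X x, s) \<partial>M)
        = (\<integral>\<^sup>+x. ennreal (X x * indicator {y\<in>space M. X y \<le> s} x) \<partial>M)"
      by (intro nn_integral_cong) (simp add: h_below_def indicator_def)
    also have "\<dots> \<le> ennreal c * emeasure M {y\<in>space M. X y \<le> s}"
      unfolding c_def using assms \<open>s \<le> a\<close> by (intro nn_integral_below_level_le) auto
    also have "\<dots> = (\<integral>\<^sup>+x. ennreal c * indicator {y\<in>space M. X y \<le> s} x \<partial>M)"
      by (rule nn_integral_cmult_indicator[symmetric]) simp
    also have "\<dots> = (\<integral>\<^sup>+x. h_const (X x, s) \<partial>M)"
      by (intro nn_integral_cong) (simp add: h_const_def indicator_def)
    finally show ?thesis .
  qed
  have "AE s in distr M borel Y. s \<le> a"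
    using Y_le by (subst AE_distr_iff) auto
  have "ennreal (\<integral>x. X x * indicator D x \<partial>M) = (\<integral>\<^sup>+x. ennreal (X x * indicator D x) \<partial>M)"
    using \<open>integrable M X\<close> X_nonneg
    by (intro nn_integral_eq_integral[symmetric] integrable_real_mult_indicator) (auto simp: indicator_def)
  also have "\<dots> = (\<integral>\<^sup>+x. h_below (X x, Y x) \<partial>M)"
    by (intro nn_integral_cong) (simp add: h_below_def D_def indicator_def)
  also have "\<dots> = (\<integral>\<^sup>+s. (\<integral>\<^sup>+x. h_below (X x, s) \<partial>M) \<partial>distr M borel Y)"
    by (simp add: nn_integral_indep_var[OF indep])
  also have "\<dots> \<le> (\<integral>\<^sup>+s. (\<integral>\<^sup>+x. h_const (X x, s) \<partial>M) \<partial>distr M borel Y)"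
    using \<open>AE s in distr M borel Y. s \<le> a\<close>
    by (intro nn_integral_mono_AE) (auto elim!: eventually_mono intro: level)
  also have "\<dots> = (\<integral>\<^sup>+x. h_const (X x, Y x) \<partial>M)"
    by (simp add: nn_integral_indep_var[OF indep])
  also have "\<dots> = (\<integral>\<^sup>+x. ennreal c * indicator D x \<partial>M)"
    by (intro nn_integral_cong) (simp add: h_const_def D_def indicator_def)
  also have "\<dots> = ennreal (c * prob D)"
    using \<open>c \<ge> 0\<close> by (simp add: nn_integral_cmult_indicator emeasure_eq_measure ennreal_mult)
  finally show ?thesis
    using \<open>c \<ge> 0\<close> by (simp add: c_def D_def ennreal_le_iff)
qed

end

theorem theorem4p3:
  fixes M :: "'a measure" and tau T :: "'a \<Rightarrow> real"
  assumes "prob_space M"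
    and "tau \<in> borel_measurable M" and "T \<in> borel_measurable M"
    and "\<forall>x\<in>space M. tau x \<ge> 0" and "\<forall>x\<in>space M. T x \<ge> 0"
    and "prob_space.indep_var M borel tau borel T"
    and "integrable M tau"
    and "\<exists>t. measure M {x \<in> space M. T x \<le> t} = 1"
    and "measure M {x \<in> space M. tau x \<le> T x} > 0"
  shows "bias_LB M tau T \<le> bias_KM M tau T \<and> bias_KM M tau T \<le> 0"
proof -
  interpret prob_space M by fact
  note [measurable] = assms(2,3)
  define a where "a = T_max M T"
  have "a \<ge> 0"
    unfolding a_def using assms(5,8) by (rule T_max_nonneg)
  have KM: "mu_KM M tau T = expectation (\<lambda>x. min (tau x) a)"
    unfolding mu_KM_def a_def using assms(2,4) T_max_nonneg[OF assms(5,8)]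
    by (rule set_integral_survival_eq_expectation_min)
  have "mu_KM M tau T \<le> mu_inf M tau"
    unfolding KM mu_inf_def using assms(7) by (intro integral_mono) auto
  moreover have "mu_LB M tau T \<le> mu_KM M tau T"
  proof -
    have "AE x in M. T x \<le> a"
      unfolding a_def using assms(3,8) by (rule AE_le_T_max)
    then have "(\<integral>x. tau x * indicator {y\<in>space M. tau y \<le> T y} x \<partial>M)
        \<le> mu_KM M tau T * prob {y\<in>space M. tau y \<le> T y}"
      unfolding KM using assms(2-4,6,7) \<open>a \<ge> 0\<close> by (intro integral_below_indep_level_le) auto
    then show ?thesis
      unfolding mu_LB_def using assms(9) by (simp add: divide_le_eq)
  qed
  ultimately show ?thesis
    unfolding bias_LB_def bias_KM_def by simp
qed

end
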